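(* Consider the $k$-item $k$-bidder environment (any set of at most $k$ bidders may be allocated; there are $k$ real bidders) in which the auctioneer communicates with bidders through private channels, as described in the context, and real bidder values are drawn i.i.d. from the exponential distribution with mean $1$. Then there exists a sufficiently large $k$ such that the Deferred-Revelation Auction (DRA) is not credible for a collateral equal to the monopoly reserve $1$.
   Context: Bidders are quasi-linear with independent values; the exponential distribution with mean $1$ has CDF $1-e^{-t}$, virtual value $v-1$, monopoly reserve $1$. The DRA: every participant (real bidders and any fake bids fabricated by the auctioneer) commits, via a perfectly hiding, perfectly binding, non-malleable commitment scheme, to an identifier and a bid and deposits collateral $f$; the committed bids are later revealed or concealed, and collateral of concealed bids is burnt; then, among revealed bids, the feasible set maximizing the sum of (reported) virtual values is allocated (lexicographic tie-breaking) and each allocated bidder pays its critical bid. Private communication model: there is no public ledger; bidders learn about other bids only through messages from the auctioneer. The auctioneer may show different sets of committed bids to different bidders, may trigger the phases separately for each bidder (e.g. learn some bidders' revealed bids before acting toward others), and may conceal a fake bid from some bidders but reveal it to others; the auctioneer can provably burn the collateral of a concealed fake bid, which costs it $f$ once per fake bid regardless of how many bidders it was shown to. Each bidder's outcome is computed from the bids it has been shown, and the set of real bidders allocated must be feasible. The auctioneer's revenue is real bidders' payments minus burnt collateral. The DRA is credible for collateral $f$ if, when real bidders bid truthfully, the auctioneer maximizes expected revenue by fabricating no bids and behaving honestly. *)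

theory Defs
  imports "HOL-Probability.Probability"
begin

text \<open>Reported virtual value for the exponential distribution with mean 1.\<close>
definition vvirt :: "real \<Rightarrow> real" where
  "vvirt b = b - 1"

definition dra_optimal :: "nat \<Rightarrow> 'a set \<Rightarrow> ('a \<Rightarrow> real) \<Rightarrow> 'a set \<Rightarrow> bool" where
  "dra_optimal k P b A \<longleftrightarrow> A \<subseteq> P \<and> card A \<le> k \<and>
     (\<forall>B. B \<subseteq> P \<and> card B \<le> k \<longrightarrow> (\<Sum>x\<in>B. vvirt (b x)) \<le> (\<Sum>x\<in>A. vvirt (b x)))"

definition dra_alloc :: "nat \<Rightarrow> 'a::linorder set \<Rightarrow> ('a \<Rightarrow> real) \<Rightarrow> 'a set" where
  "dra_alloc k P b = (THE A. dra_optimal k P b A \<and>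
      (\<forall>B. dra_optimal k P b B \<and> B \<noteq> A \<longrightarrow> Min ((A - B) \<union> (B - A)) \<in> A))"

definition dra_critical :: "nat \<Rightarrow> 'a::linorder set \<Rightarrow> ('a \<Rightarrow> real) \<Rightarrow> 'a \<Rightarrow> real" where
  "dra_critical k P b i = Inf {x. i \<in> dra_alloc k P (b(i := x))}"

definition dra_payment :: "nat \<Rightarrow> 'a::linorder set \<Rightarrow> ('a \<Rightarrow> real) \<Rightarrow> 'a \<Rightarrow> real" where
  "dra_payment k P b i = (if i \<in> dra_alloc k P b then dra_critical k P b i else 0)"

text \<open>A (deterministic) auctioneer strategy in the private communication model,
  as functions of the real bidders' value profile v (real bidders are 0..<k).
  - au_order v: order in which the auctioneer obtains the bidders' revealed bids;
  - au_realshown v i: real bidders whose commitments are shown to bidder i;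
  - au_fakeshown v i: fake bids (identified by nat) whose commitments are shown to i;
  - au_fakebid v j: committed bid of fake j;
  - au_reveal v i j: whether fake j is revealed to bidder i (otherwise concealed).\<close>
record auctioneer =
  au_order :: "(nat \<Rightarrow> real) \<Rightarrow> nat list"
  au_realshown :: "(nat \<Rightarrow> real) \<Rightarrow> nat \<Rightarrow> nat set"
  au_fakeshown :: "(nat \<Rightarrow> real) \<Rightarrow> nat \<Rightarrow> nat set"
  au_fakebid :: "(nat \<Rightarrow> real) \<Rightarrow> nat \<Rightarrow> real"
  au_reveal :: "(nat \<Rightarrow> real) \<Rightarrow> nat \<Rightarrow> nat \<Rightarrow> bool"

text \<open>Bidder i's view: participant identifiers are nat, real bidder i is i,
  fake j is k + j. The revealed bids bidder i is shown.\<close>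
definition view_set :: "nat \<Rightarrow> auctioneer \<Rightarrow> (nat \<Rightarrow> real) \<Rightarrow> nat \<Rightarrow> nat set" where
  "view_set k s v i = insert i (au_realshown s v i) \<union>
     (\<lambda>j. k + j) ` {j \<in> au_fakeshown s v i. au_reveal s v i j}"

definition view_bid :: "nat \<Rightarrow> auctioneer \<Rightarrow> (nat \<Rightarrow> real) \<Rightarrow> nat \<Rightarrow> real" where
  "view_bid k s v p = (if p < k then v p else au_fakebid s v (p - k))"

definition burnt_fakes :: "nat \<Rightarrow> auctioneer \<Rightarrow> (nat \<Rightarrow> real) \<Rightarrow> nat set" where
  "burnt_fakes k s v = {j. \<exists>i<k. j \<in> au_fakeshown s v i \<and> \<not> au_reveal s v i j}"

text \<open>Admissible strategies: the bidder processed at step t, together with all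
  commitments shown to it (and the committed values of the fakes among them),
  may depend only on the revealed values of the bidders processed before it;
  the reveal/conceal decisions are unrestricted.\<close>
definition au_valid :: "nat \<Rightarrow> auctioneer \<Rightarrow> bool" where
  "au_valid k s \<longleftrightarrow>
     (\<forall>v. distinct (au_order s v) \<and> set (au_order s v) = {..<k} \<and>
        (\<forall>i<k. au_realshown s v i \<subseteq> {..<k} - {i} \<and> finite (au_fakeshown s v i)) \<and>
        card {i. i < k \<and> i \<in> dra_alloc k (view_set k s v i) (view_bid k s v)} \<le> k) \<and>
     (\<forall>v v' t. t < k \<longrightarrow> (\<forall>j\<in>set (take t (au_order s v)). v j = v' j) \<longrightarrow>
        (let i = au_order s v ! t in
           take (Suc t) (au_order s v') = take (Suc t) (au_order s v) \<and>
           au_realshown s v' i = au_realshown s v i \<and>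
           au_fakeshown s v' i = au_fakeshown s v i \<and>
           (\<forall>j\<in>au_fakeshown s v i. au_fakebid s v' j = au_fakebid s v j)))"

definition au_honest :: "nat \<Rightarrow> auctioneer" where
  "au_honest k = \<lparr> au_order = (\<lambda>v. [0..<k]), au_realshown = (\<lambda>v i. {..<k} - {i}),
     au_fakeshown = (\<lambda>v i. {}), au_fakebid = (\<lambda>v j. 0), au_reveal = (\<lambda>v i j. True) \<rparr>"

definition dra_revenue :: "nat \<Rightarrow> real \<Rightarrow> auctioneer \<Rightarrow> (nat \<Rightarrow> real) \<Rightarrow> real" where
  "dra_revenue k f s v =
     (\<Sum>i<k. dra_payment k (view_set k s v i) (view_bid k s v) i) - f * real (card (burnt_fakes k s v))"

definition value_measure :: "nat \<Rightarrow> (nat \<Rightarrow> real) measure" where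
  "value_measure k = PiM {..<k} (\<lambda>_. density lborel (exponential_density 1))"

definition dra_credible :: "nat \<Rightarrow> real \<Rightarrow> bool" where
  "dra_credible k f \<longleftrightarrow>
     (\<forall>s. au_valid k s \<longrightarrow> integrable (value_measure k) (dra_revenue k f s) \<longrightarrow>
        (\<integral>v. dra_revenue k f s v \<partial>value_measure k)
          \<le> (\<integral>v. dra_revenue k f (au_honest k) v \<partial>value_measure k))"

end

theory Submission
  imports Defs
begin

(* The auctioneer shows every bidder k + 1 fake bids of 2 and no real bid. Once a bidder's
   value v is known, two of the fakes are concealed from it if v < 2: it then sees at most k
   participants, and the DRA just posts the monopoly reserve 1. If v >= 2 only one fake is
   concealed: the bidder faces k bids of 2, wins the tie by its smaller identifier and pays 2.
   Only two fakes are ever concealed, so the collateral lost is 2, while the expected payment of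
   each bidder rises from P(v >= 1) = e^-1 to P(1 <= v < 2) + 2 P(v >= 2) = e^-1 + e^-2.
   Deviating is profitable as soon as k e^-2 > 2. *)

lemma Min_sym_diff_in_remove_Max:
  fixes P :: "'a::linorder set"
  assumes fin: "finite P" and BP: "B \<subseteq> P" and card: "card B < card P"
    and ne: "B \<noteq> P - {Max P}"
  shows "Min ((P - {Max P} - B) \<union> (B - (P - {Max P}))) \<in> P - {Max P}"
proof (rule ccontr)
  let ?A = "P - {Max P}"
  let ?S = "(?A - B) \<union> (B - ?A)"
  assume notA: "Min ?S \<notin> ?A"
  have finS: "finite ?S" using fin BP by (auto intro: finite_subset)
  moreover have "?S \<noteq> {}" using ne by blast
  ultimately have "Min ?S \<in> ?S" by (rule Min_in)
  then have MinB: "Min ?S \<in> B" and MinMax: "Min ?S = Max P" using notA BP by auto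
  have onlyMax: "x = Max P" if "x \<in> ?S" for x
  proof (rule antisym)
    show "x \<le> Max P" using that BP by (intro Max_ge[OF fin]) auto
    show "Max P \<le> x" using Min_le[OF finS that] MinMax by simp
  qed
  have "P \<subseteq> B"
  proof
    fix y assume y: "y \<in> P"
    show "y \<in> B"
    proof (cases "y = Max P")
      case True
      then show ?thesis using MinB MinMax by simp
    next
      case False
      then show ?thesis using onlyMax[of y] y by blast
    qed
  qed
  then show False using card card_mono[OF finite_subset[OF BP fin]] by (simp add: leD)
qed

lemma dra_optimalI:
  assumes "A \<subseteq> P" and "card A \<le> k"
    and "\<And>B. B \<subseteq> P \<Longrightarrow> card B \<le> k \<Longrightarrow> (\<Sum>x\<in>B. vvirt (b x)) \<le> (\<Sum>x\<in>A. vvirt (b x))"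
  shows "dra_optimal k P b A"
  using assms unfolding dra_optimal_def by blast

lemma dra_optimalD:
  assumes "dra_optimal k P b A"
  shows "A \<subseteq> P" and "card A \<le> k"
    and "B \<subseteq> P \<Longrightarrow> card B \<le> k \<Longrightarrow> (\<Sum>x\<in>B. vvirt (b x)) \<le> (\<Sum>x\<in>A. vvirt (b x))"
  using assms unfolding dra_optimal_def by auto

lemma dra_alloc_eqI:
  assumes fin: "finite P" and opt: "dra_optimal k P b A"
    and tie: "\<And>B. dra_optimal k P b B \<Longrightarrow> B \<noteq> A \<Longrightarrow> Min ((A - B) \<union> (B - A)) \<in> A"
  shows "dra_alloc k P b = A"
  unfolding dra_alloc_def
proof (rule the_equality)
  fix A' assume A': "dra_optimal k P b A' \<and>
    (\<forall>B. dra_optimal k P b B \<and> B \<noteq> A' \<longrightarrow> Min ((A' - B) \<union> (B - A')) \<in> A')"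
  show "A' = A"
  proof (rule ccontr)
    assume ne: "A' \<noteq> A"
    let ?S = "(A - A') \<union> (A' - A)"
    have "Min ?S \<in> A" using tie A' ne by blast
    moreover have "Min ?S \<in> A'" using A' opt ne by (metis Un_commute)
    moreover have "finite ?S"
      using fin opt A' by (auto simp: dra_optimal_def intro: finite_subset)
    then have "Min ?S \<in> ?S" using ne by (intro Min_in) auto
    ultimately show False by blast
  qed
qed (use opt tie in blast)

lemma dra_alloc_card_le:
  assumes fin: "finite P" and card: "card P \<le> k"
  shows "dra_alloc k P b = {p \<in> P. 1 \<le> b p}"
proof -
  let ?A = "{p \<in> P. 1 \<le> b p}"
  let ?w = "\<lambda>B. \<Sum>x\<in>B. vvirt (b x)"
  let ?g = "\<lambda>x. max 0 (vvirt (b x))"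
  have "?w ?A = (\<Sum>x\<in>P. if 1 \<le> b x then vvirt (b x) else 0)"
    using fin by (rule sum.inter_filter)
  also have "\<dots> = (\<Sum>x\<in>P. ?g x)" by (rule sum.cong) (auto simp: vvirt_def)
  finally have wA: "?w ?A = (\<Sum>x\<in>P. ?g x)" .
  have le: "?w B \<le> ?w ?A" if "B \<subseteq> P" for B
  proof -
    have "?w B \<le> (\<Sum>x\<in>B. ?g x)" by (intro sum_mono) simp
    also have "\<dots> \<le> (\<Sum>x\<in>P. ?g x)" using fin that by (intro sum_mono2) auto
    finally show ?thesis using wA by simp
  qed
  have less: "?w B < ?w ?A" if "B \<subseteq> P" "x \<in> B" "b x < 1" for B x
  proof -
    have "finite B" using fin that(1) by (rule finite_subset[rotated])
    moreover have "b x - 1 < max 0 (b x - 1)" using that(3) by simp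
    ultimately have "?w B < (\<Sum>x\<in>B. ?g x)"
      using that(2) by (intro sum_strict_mono_ex1) (auto simp: vvirt_def)
    also have "\<dots> \<le> (\<Sum>x\<in>P. ?g x)" using fin that by (intro sum_mono2) auto
    finally show ?thesis using wA by simp
  qed
  have "card ?A \<le> k" using card_mono[OF fin, of ?A] card by auto
  then have opt: "dra_optimal k P b ?A" using le by (simp add: dra_optimal_def)
  show ?thesis
  proof (rule dra_alloc_eqI[OF fin opt])
    fix B assume B: "dra_optimal k P b B" "B \<noteq> ?A"
    have BP: "B \<subseteq> P" using B(1) by (rule dra_optimalD)
    have wB: "?w ?A \<le> ?w B"
      using dra_optimalD(3)[OF B(1) _ \<open>card ?A \<le> k\<close>] by simp
    have "B \<subseteq> ?A"
    proof
      fix x assume x: "x \<in> B"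
      have "\<not> b x < 1"
      proof
        assume "b x < 1"
        from less[OF BP x this] wB show False by simp
      qed
      then show "x \<in> ?A" using x BP by auto
    qed
    then have "(?A - B) \<union> (B - ?A) = ?A - B" "?A - B \<noteq> {}" using B(2) by auto
    then show "Min ((?A - B) \<union> (B - ?A)) \<in> ?A"
      using fin Min_in[of "?A - B"] by auto
  qed
qed

lemma sum_vvirt_equal_bids:
  fixes c :: real
  assumes "finite B" and "\<And>p. p \<in> B - {i} \<Longrightarrow> b p = c"
  shows "(\<Sum>x\<in>B. vvirt (b x)) = (if i \<in> B then vvirt (b i) else 0) + (c - 1) * card (B - {i})"
proof -
  have "(\<Sum>x\<in>B - {i}. vvirt (b x)) = (\<Sum>x\<in>B - {i}. c - 1)"
    using assms(2) by (intro sum.cong) (auto simp: vvirt_def)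
  then show ?thesis
    using assms(1) by (cases "i \<in> B") (simp_all add: sum.remove mult.commute)
qed

lemma dra_alloc_against_equal_bids_high:
  fixes c :: real
  assumes fin: "finite F" and cF: "card F = k" and k: "1 \<le> k" and iF: "i \<notin> F"
    and c: "1 < c" and high: "c \<le> b i" and F: "\<And>p. p \<in> F \<Longrightarrow> i < p \<and> b p = c"
  shows "dra_alloc k (insert i F) b = insert i (F - {Max F})"
proof -
  let ?P = "insert i F"
  let ?A = "?P - {Max ?P}"
  let ?w = "\<lambda>B. \<Sum>x\<in>B. vvirt (b x)"
  have finP: "finite ?P" using fin by simp
  have w: "?w B = (if i \<in> B then vvirt (b i) else 0) + (c - 1) * card (B - {i})"
    if "B \<subseteq> ?P" for B
    using that F by (intro sum_vvirt_equal_bids finite_subset[OF that finP]) auto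
  obtain p where p: "p \<in> F" using cF k by fastforce
  have "i < Max F" using F[OF p] Max_ge[OF fin p] by (blast intro: less_le_trans)
  moreover have "Max ?P = max i (Max F)" using fin p by (intro Max_insert) auto
  ultimately have A: "?A = insert i (F - {Max F})" by auto
  have "Max F \<in> F" using fin p by (intro Max_in) auto
  then have cardA: "card ?A = k" and "card (?A - {i}) = k - 1"
    unfolding A using fin cF iF k by (simp_all add: card_Diff_singleton)
  then have wA: "?w ?A = vvirt (b i) + (c - 1) * (real k - 1)"
    using w[OF Diff_subset, of "{Max ?P}"] k unfolding A by (simp add: of_nat_diff)
  have "?w B \<le> ?w ?A" if "B \<subseteq> ?P" "card B \<le> k" for B
  proof -
    have "real (card (B - {i})) \<le> real k - (if i \<in> B then 1 else 0)"
      using that card_Suc_Diff1[OF finite_subset[OF that(1) finP], of i] by (cases "i \<in> B") auto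
    then have "(c - 1) * card (B - {i}) \<le> (c - 1) * (real k - (if i \<in> B then 1 else 0))"
      using c by (intro mult_left_mono) auto
    moreover have "c - 1 \<le> vvirt (b i)" using high by (simp add: vvirt_def)
    ultimately show ?thesis
      using w[OF that(1)] wA by (cases "i \<in> B") (simp_all add: algebra_simps)
  qed
  then have "dra_optimal k ?P b ?A" using cardA by (intro dra_optimalI) auto
  moreover have "Min ((?A - B) \<union> (B - ?A)) \<in> ?A" if "dra_optimal k ?P b B" "B \<noteq> ?A" for B
    using Min_sym_diff_in_remove_Max[OF finP] dra_optimalD[OF that(1)] that(2) cF fin iF by simp
  ultimately show ?thesis unfolding A[symmetric] by (rule dra_alloc_eqI[OF finP])
qed

lemma dra_alloc_against_equal_bids_low:
  fixes c :: real
  assumes fin: "finite F" and cF: "card F = k" and iF: "i \<notin> F"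
    and c: "1 < c" and low: "b i < c" and F: "\<And>p. p \<in> F \<Longrightarrow> b p = c"
  shows "dra_alloc k (insert i F) b = F"
proof -
  let ?P = "insert i F"
  let ?w = "\<lambda>B. \<Sum>x\<in>B. vvirt (b x)"
  have finP: "finite ?P" using fin by simp
  have w: "?w B = (if i \<in> B then vvirt (b i) else 0) + (c - 1) * card (B - {i})"
    if "B \<subseteq> ?P" for B
    using that F by (intro sum_vvirt_equal_bids finite_subset[OF that finP]) auto
  have wF: "?w F = (c - 1) * k" using w[of F] iF cF by auto
  have le: "?w B \<le> ?w F" and less: "i \<in> B \<Longrightarrow> ?w B < ?w F"
    if "B \<subseteq> ?P" "card B \<le> k" for B
  proof -
    have "real (card (B - {i})) \<le> real k - (if i \<in> B then 1 else 0)"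
      using that card_Suc_Diff1[OF finite_subset[OF that(1) finP], of i] by (cases "i \<in> B") auto
    then have "(c - 1) * card (B - {i}) \<le> (c - 1) * (real k - (if i \<in> B then 1 else 0))"
      using c by (intro mult_left_mono) auto
    moreover have "vvirt (b i) < c - 1" using low by (simp add: vvirt_def)
    ultimately show "?w B \<le> ?w F" and "i \<in> B \<Longrightarrow> ?w B < ?w F"
      using w[OF that(1)] wF by (cases "i \<in> B"; simp add: algebra_simps)+
  qed
  have optF: "dra_optimal k ?P b F" using cF by (intro dra_optimalI le) auto
  have "B = F" if "dra_optimal k ?P b B" for B
  proof -
    note B = dra_optimalD[OF that]
    have "?w F \<le> ?w B" using B(3)[OF subset_insertI] cF by simp
    then have "i \<notin> B" using less[OF B(1,2)] by (auto simp: not_less[symmetric])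
    then have "B \<subseteq> F" using B(1) by blast
    moreover have "(c - 1) * k \<le> (c - 1) * card B"
      using \<open>?w F \<le> ?w B\<close> wF w[OF B(1)] \<open>i \<notin> B\<close> \<open>B \<subseteq> F\<close> by simp
    then have "k \<le> card B" using c by simp
    ultimately show "B = F" using card_subset_eq[OF fin] cF B(2) by simp
  qed
  then show ?thesis by (intro dra_alloc_eqI[OF finP optF]) auto
qed

lemma dra_payment_threshold:
  assumes "\<And>x. i \<in> dra_alloc k P (b(i := x)) \<longleftrightarrow> r \<le> x"
  shows "dra_payment k P b i = (if r \<le> b i then r else 0)"
proof -
  have "i \<in> dra_alloc k P b \<longleftrightarrow> r \<le> b i" using assms[of "b i"] by simp
  moreover have "{x. i \<in> dra_alloc k P (b(i := x))} = {r..}" using assms by auto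
  ultimately show ?thesis by (simp add: dra_payment_def dra_critical_def)
qed

lemma dra_payment_card_le:
  assumes "finite P" and "card P \<le> k" and "i \<in> P"
  shows "dra_payment k P b i = (if 1 \<le> b i then 1 else 0)"
  using assms by (intro dra_payment_threshold) (simp add: dra_alloc_card_le)

lemma dra_payment_against_equal_bids:
  fixes c :: real
  assumes fin: "finite F" and cF: "card F = k" and k: "1 \<le> k" and iF: "i \<notin> F"
    and c: "1 < c" and F: "\<And>p. p \<in> F \<Longrightarrow> i < p \<and> b p = c"
  shows "dra_payment k (insert i F) b i = (if c \<le> b i then c else 0)"
proof (rule dra_payment_threshold)
  fix x
  have F': "\<And>p. p \<in> F \<Longrightarrow> i < p \<and> (b(i := x)) p = c" using F iF by auto
  show "i \<in> dra_alloc k (insert i F) (b(i := x)) \<longleftrightarrow> c \<le> x"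
  proof (cases "c \<le> x")
    case True
    then show ?thesis
      using dra_alloc_against_equal_bids_high[where b="b(i := x)", OF fin cF k iF c _ F'] by simp
  next
    case False
    then show ?thesis
      using dra_alloc_against_equal_bids_low[where b="b(i := x)", OF fin cF iF c] F' iF by simp
  qed
qed

lemma (in prob_space) exponential_distributedD_ge:
  assumes D: "distributed M lborel X (exponential_density l)" and a: "0 \<le> a" and l: "0 < l"
  shows "\<P>(x in M. a \<le> X x) = exp (- a * l)"
proof -
  have "AE x in distr M lborel X. x \<noteq> a"
    unfolding distributed_distr_eq_density[OF D]
    by (subst AE_density) (auto intro: AE_lborel_singleton[THEN eventually_mono])
  then have "AE x in M. X x \<noteq> a"
    by (rule AE_distrD[OF distributed_measurable[OF D]])
  then have "\<P>(x in M. a \<le> X x) = \<P>(x in M. a < X x)"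
    using distributed_measurable[OF D]
    by (intro prob_eq_AE) (auto elim: eventually_mono)
  also have "\<dots> = exp (- a * l)"
    by (rule exponential_distributedD_gt[OF D a l])
  finally show ?thesis .
qed

lemma (in prob_space) exponential_distributed_indicator_atLeast:
  assumes D: "distributed M lborel X (exponential_density l)" and a: "0 \<le> a" and l: "0 < l"
  shows "integrable M (\<lambda>x. indicator {a..} (X x) :: real)"
    and "expectation (\<lambda>x. indicator {a..} (X x)) = exp (- a * l)"
proof -
  show "integrable M (\<lambda>x. indicator {a..} (X x) :: real)"
    using distributed_measurable[OF D]
    by (intro integrable_const_bound[where B=1]) (auto split: split_indicator)
  have "(\<lambda>x. indicator {a..} (X x) :: real) = indicator {x. a \<le> X x}"
    by (auto split: split_indicator)
  then have "expectation (\<lambda>x. indicator {a..} (X x)) = \<P>(x in M. a \<le> X x)"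
    by (simp add: Int_def conj_commute)
  then show "expectation (\<lambda>x. indicator {a..} (X x)) = exp (- a * l)"
    using exponential_distributedD_ge[OF D a l] by simp
qed

lemma prob_space_value_measure: "prob_space (value_measure k)"
  unfolding value_measure_def
  by (auto intro!: prob_space_PiM prob_space_exponential_density)

lemma value_measure_component_distributed:
  assumes "i < k"
  shows "distributed (value_measure k) lborel (\<lambda>v. v i) (exponential_density 1)"
proof -
  let ?E = "density lborel (exponential_density 1)"
  have "distr (value_measure k) lborel (\<lambda>v. v i) = distr (value_measure k) ?E (\<lambda>v. v i)"
    by (rule distr_cong) auto
  also have "\<dots> = ?E"
    unfolding value_measure_def
    using assms by (auto intro!: distr_PiM_component prob_space_exponential_density)
  finally show ?thesis
    unfolding distributed_def value_measure_def
    using assms by (auto intro!: measurable_component_singleton)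
qed

lemma integral_indicator_value_component:
  assumes "i < k" and "0 \<le> a"
  shows "integrable (value_measure k) (\<lambda>v. indicator {a..} (v i) :: real)"
    and "(\<integral>v. indicator {a..} (v i) \<partial>value_measure k) = exp (- a)"
  using prob_space.exponential_distributed_indicator_atLeast[OF prob_space_value_measure
      value_measure_component_distributed[OF assms(1)] assms(2)]
  by simp_all

lemma dra_revenue_honest:
  "dra_revenue k f (au_honest k) v = (\<Sum>i<k. indicator {1..} (v i))"
proof -
  have "burnt_fakes k (au_honest k) v = {}" by (simp add: burnt_fakes_def au_honest_def)
  moreover have "dra_payment k (view_set k (au_honest k) v i) (view_bid k (au_honest k) v) i
      = indicator {1..} (v i)" if "i < k" for i
  proof -
    have "view_set k (au_honest k) v i = {..<k}"
      using that by (auto simp: view_set_def au_honest_def)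
    then show ?thesis using that by (simp add: dra_payment_card_le view_bid_def indicator_def)
  qed
  ultimately show ?thesis unfolding dra_revenue_def by simp
qed

(* When v i >= 2, bidder 0 loses fake 0 and every other bidder fake 1, so that exactly the
   fakes 0 and 1 are burnt whatever the values are. *)
definition fake_bid_auctioneer :: "nat \<Rightarrow> auctioneer" where
  "fake_bid_auctioneer k = \<lparr> au_order = (\<lambda>v. [0..<k]), au_realshown = (\<lambda>v i. {}),
     au_fakeshown = (\<lambda>v i. {0..k}), au_fakebid = (\<lambda>v j. 2),
     au_reveal = (\<lambda>v i j. if v i < 2 then 2 \<le> j else j \<noteq> min i 1) \<rparr>"

lemma au_valid_fake_bid_auctioneer: "au_valid k (fake_bid_auctioneer k)"
proof -
  have "card {i. i < k \<and> P i} \<le> k" for P :: "nat \<Rightarrow> bool"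
    using card_mono[of "{..<k}" "{i. i < k \<and> P i}"] by auto
  then show ?thesis
    unfolding au_valid_def by (simp add: fake_bid_auctioneer_def atLeast0LessThan)
qed

lemma burnt_fakes_fake_bid_auctioneer:
  assumes "2 \<le> k"
  shows "burnt_fakes k (fake_bid_auctioneer k) v = {0, 1}"
proof (intro set_eqI iffI)
  fix j assume "j \<in> burnt_fakes k (fake_bid_auctioneer k) v"
  then show "j \<in> {0, 1}"
    by (auto simp: burnt_fakes_def fake_bid_auctioneer_def split: if_splits)
next
  fix j :: nat assume j: "j \<in> {0, 1}"
  then have "\<exists>i<k. j \<le> k \<and> \<not> (if v i < 2 then 2 \<le> j else j \<noteq> min i 1)"
    using assms by (intro exI[of _ j]) auto
  then show "j \<in> burnt_fakes k (fake_bid_auctioneer k) v"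
    by (auto simp: burnt_fakes_def fake_bid_auctioneer_def)
qed

lemma dra_payment_fake_bid_auctioneer:
  assumes k: "2 \<le> k" and i: "i < k"
  shows "dra_payment k (view_set k (fake_bid_auctioneer k) v i) (view_bid k (fake_bid_auctioneer k) v) i
     = indicator {1..} (v i) + indicator {2..} (v i)"
proof -
  let ?b = "view_bid k (fake_bid_auctioneer k) v"
  let ?F = "\<lambda>J. (\<lambda>j. k + j) ` J"
  have b: "?b i = v i" "\<And>j. ?b (k + j) = 2"
    using i by (simp_all add: view_bid_def fake_bid_auctioneer_def)
  have card: "card (?F J) = card J" for J by (simp add: card_image)
  show ?thesis
  proof (cases "v i < 2")
    case True
    have "{j \<in> {0..k}. 2 \<le> j} = {2..k}" by auto
    then have "view_set k (fake_bid_auctioneer k) v i = insert i (?F {2..k})"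
      using True by (simp add: view_set_def fake_bid_auctioneer_def)
    moreover have "card (insert i (?F {2..k})) \<le> k"
      using i k by (auto simp: card_insert_if card)
    ultimately show ?thesis
      using True b by (simp add: dra_payment_card_le indicator_def)
  next
    case False
    have "{j \<in> {0..k}. j \<noteq> min i 1} = {0..k} - {min i 1}" by auto
    then have "view_set k (fake_bid_auctioneer k) v i = insert i (?F ({0..k} - {min i 1}))"
      using False by (simp add: view_set_def fake_bid_auctioneer_def)
    moreover have "dra_payment k (insert i (?F ({0..k} - {min i 1}))) ?b i = (if 2 \<le> ?b i then 2 else 0)"
      using i k b by (intro dra_payment_against_equal_bids) (auto simp: card)
    ultimately show ?thesis
      using False b by (simp add: indicator_def)
  qed
qed

lemma dra_revenue_fake_bid_auctioneer:
  assumes "2 \<le> k"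
  shows "dra_revenue k 1 (fake_bid_auctioneer k) v
     = (\<Sum>i<k. indicator {1..} (v i) + indicator {2..} (v i)) - 2"
  using assms
  by (simp add: dra_revenue_def burnt_fakes_fake_bid_auctioneer dra_payment_fake_bid_auctioneer)

lemma expected_dra_revenue_honest:
  "(\<integral>v. dra_revenue k f (au_honest k) v \<partial>value_measure k) = k * exp (- 1)"
  using integral_indicator_value_component[of _ k 1]
  by (simp add: dra_revenue_honest Bochner_Integration.integral_sum)

lemma expected_dra_revenue_fake_bid_auctioneer:
  assumes "2 \<le> k"
  shows "integrable (value_measure k) (dra_revenue k 1 (fake_bid_auctioneer k))"
    and "(\<integral>v. dra_revenue k 1 (fake_bid_auctioneer k) v \<partial>value_measure k)
      = k * (exp (- 1) + exp (- 2)) - 2"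
proof -
  interpret prob_space "value_measure k" by (rule prob_space_value_measure)
  note I = integral_indicator_value_component[of _ k 1] integral_indicator_value_component[of _ k 2]
  have rev: "dra_revenue k 1 (fake_bid_auctioneer k)
      = (\<lambda>v. (\<Sum>i<k. indicator {1..} (v i) + indicator {2..} (v i)) - 2)"
    using dra_revenue_fake_bid_auctioneer[OF assms] by (rule ext)
  have "integrable (value_measure k) (\<lambda>v. \<Sum>i<k. indicator {1..} (v i) + indicator {2..} (v i) :: real)"
    using I by (intro Bochner_Integration.integrable_sum Bochner_Integration.integrable_add) auto
  then show "integrable (value_measure k) (dra_revenue k 1 (fake_bid_auctioneer k))"
    unfolding rev by (intro Bochner_Integration.integrable_diff) auto
  have "(\<integral>v. dra_revenue k 1 (fake_bid_auctioneer k) v \<partial>value_measure k)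
      = (\<Sum>i<k. expectation (\<lambda>v. indicator {1..} (v i) + indicator {2..} (v i) :: real)) - 2"
    unfolding rev using I \<open>integrable _ (\<lambda>v. \<Sum>i<k. _)\<close> prob_space
    by (simp add: Bochner_Integration.integral_diff Bochner_Integration.integral_sum Bochner_Integration.integrable_add)
  also have "\<dots> = k * (exp (- 1) + exp (- 2)) - 2"
    using I by (simp add: Bochner_Integration.integral_add)
  finally show "(\<integral>v. dra_revenue k 1 (fake_bid_auctioneer k) v \<partial>value_measure k)
      = k * (exp (- 1) + exp (- 2)) - 2" .
qed

lemma dra_not_credible:
  assumes "2 < k * exp (- 2)"
  shows "\<not> dra_credible k 1"
proof
  let ?V = "value_measure k"
  have "real k * exp (- 2) \<le> real k" by (intro mult_left_le) auto
  then have k: "2 \<le> k" using assms by linarith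
  assume "dra_credible k 1"
  then have "(\<integral>v. dra_revenue k 1 (fake_bid_auctioneer k) v \<partial>?V)
      \<le> (\<integral>v. dra_revenue k 1 (au_honest k) v \<partial>?V)"
    using au_valid_fake_bid_auctioneer expected_dra_revenue_fake_bid_auctioneer(1)[OF k]
    unfolding dra_credible_def by blast
  then show False
    using assms expected_dra_revenue_fake_bid_auctioneer(2)[OF k] expected_dra_revenue_honest
    by (simp add: algebra_simps)
qed

theorem mainTheorem8:
  shows "\<exists>k::nat. \<not> dra_credible k 1"
proof
  have "exp (2::real) = exp 1 ^ 2" by (simp add: exp_double[symmetric])
  also have "\<dots> \<le> 3 ^ 2" using exp_le by (intro power_mono) auto
  finally have "2 < real 20 * exp (- 2)"
    by (simp add: exp_minus field_simps)
  then show "\<not> dra_credible 20 1" by (rule dra_not_credible)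
qed

end
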